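(* Let $Q$ be the four-point space with points $p,m,u,c$ whose open sets are exactly the subsets $S$ such that ($m\in S\Rightarrow p,u\in S$) and ($c\in S\Rightarrow u\in S$) (thus $m\in\overline{\{p\}}$, $m\in\overline{\{u\}}$, $c\in\overline{\{u\}}$). Let $T$ be the Sierpiński space with points $s,c$ and open sets $\emptyset,\{s\},\{s,c\}$, and let $q:Q\to T$ send $p,m,u\mapsto s$ and $c\mapsto c$. A non-empty topological space $X$ is regular (every point $x$ and closed set $F$ with $x\notin F$ have disjoint open neighbourhoods) iff for every point $x\in X$, the map $\{x\}\to X$ satisfies $(\{x\}\to X)\rightthreetimes q$.
   Context: For morphisms $f:A\to B$ and $g:X\to Y$ in a category, write $f\rightthreetimes g$ ("$f$ has the left lifting property with respect to $g$") if for all morphisms $i:A\to X$, $j:B\to Y$ with $g\circ i=j\circ f$ there exists a morphism $h:B\to X$ with $h\circ f=i$ and $g\circ h=j$. No $T_0$ or $T_1$ assumption is included in "regular". *)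

theory Defs
  imports "HOL-Analysis.Analysis"
begin

datatype qpt = Qp | Qm | Qu | Qc

definition Qopen :: "qpt set \<Rightarrow> bool" where
  "Qopen S \<longleftrightarrow> (Qm \<in> S \<longrightarrow> Qp \<in> S \<and> Qu \<in> S) \<and> (Qc \<in> S \<longrightarrow> Qu \<in> S)"

lemma istopology_Qopen: "istopology Qopen"
  unfolding istopology_def Qopen_def by blast

definition Qtop :: "qpt topology" where
  "Qtop = topology Qopen"

lemma openin_Qtop: "openin Qtop S \<longleftrightarrow> Qopen S"
  by (simp add: Qtop_def topology_inverse' istopology_Qopen)

datatype tpt = Ts | Tc

definition Topen :: "tpt set \<Rightarrow> bool" where
  "Topen S \<longleftrightarrow> S = {} \<or> S = {Ts} \<or> S = {Ts, Tc}"

lemma istopology_Topen: "istopology Topen"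
  unfolding istopology_def Topen_def
  apply (intro conjI allI impI)
   apply auto[1]
  apply (simp add: subset_insert_iff)
  by (smt (verit) Union_empty Union_insert Union_subsetI Un_absorb cSup_singleton
      insert_absorb insert_commute insert_not_empty subset_insert_iff subset_singletonD tpt.exhaust
      empty_subsetI Sup_empty UNIV_I Union_upper equalityI subsetI)

definition Ttop :: "tpt topology" where
  "Ttop = topology Topen"

definition q :: "qpt \<Rightarrow> tpt" where
  "q x = (if x = Qc then Tc else Ts)"

definition llp :: "'a topology \<Rightarrow> 'b topology \<Rightarrow> ('a \<Rightarrow> 'b) \<Rightarrow>
                   'c topology \<Rightarrow> 'd topology \<Rightarrow> ('c \<Rightarrow> 'd) \<Rightarrow> bool" where
  "llp A B f X Y g \<longleftrightarrow>
     (\<forall>i j. continuous_map A X i \<and> continuous_map B Y j \<and>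
            (\<forall>a\<in>topspace A. g (i a) = j (f a)) \<longrightarrow>
        (\<exists>h. continuous_map B X h \<and>
             (\<forall>a\<in>topspace A. h (f a) = i a) \<and>
             (\<forall>b\<in>topspace B. g (h b) = j b)))"

end

theory Submission
  imports Defs
begin

text \<open>A map \<open>j : X \<rightarrow> T\<close> is the same as the closed set \<open>F = j\<^sup>-\<^sup>1(Tc)\<close>, and a lift of \<open>j\<close>
  along \<open>q\<close> is a continuous \<open>h : X \<rightarrow> Q\<close> with \<open>h\<^sup>-\<^sup>1(Qc) = F\<close>. Such a lift amounts to two
  disjoint open sets \<open>P = h\<^sup>-\<^sup>1(Qp)\<close> and \<open>W = h\<^sup>-\<^sup>1{Qu, Qc} \<supseteq> F\<close>, everything else going to
  \<open>Qm\<close>. Prescribing \<open>h x = Qp\<close> for a point \<open>x \<notin> F\<close> therefore asks exactly for a separation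
  of \<open>x\<close> from \<open>F\<close>; the other prescribed values are always attainable, with \<open>P = {}\<close>.\<close>

lemma continuous_map_from_singleton_iff:
  assumes "x \<in> topspace X"
  shows "continuous_map (subtopology X {x}) Y i \<longleftrightarrow> i x \<in> topspace Y"
proof -
  have point: "topspace (subtopology X {x}) = {x}"
    using assms by auto
  show ?thesis
  proof
    assume "continuous_map (subtopology X {x}) Y i"
    then show "i x \<in> topspace Y"
      using point by (metis continuous_map_def Pi_iff singletonI)
  next
    assume "i x \<in> topspace Y"
    then have "continuous_map (subtopology X {x}) Y (\<lambda>_. i x)"
      by simp
    then show "continuous_map (subtopology X {x}) Y i"
      by (rule continuous_map_eq) (simp add: point)
  qed
qed

lemma llp_singleton_iff:
  assumes "x \<in> topspace X"
  shows "llp (subtopology X {x}) X id Y Z g \<longleftrightarrow>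
    (\<forall>a j. a \<in> topspace Y \<and> continuous_map X Z j \<and> g a = j x \<longrightarrow>
       (\<exists>h. continuous_map X Y h \<and> h x = a \<and> (\<forall>y\<in>topspace X. g (h y) = j y)))"
proof -
  have point: "topspace (subtopology X {x}) = {x}"
    using assms by auto
  show ?thesis
  proof
    assume llp: "llp (subtopology X {x}) X id Y Z g"
    show "\<forall>a j. a \<in> topspace Y \<and> continuous_map X Z j \<and> g a = j x \<longrightarrow>
       (\<exists>h. continuous_map X Y h \<and> h x = a \<and> (\<forall>y\<in>topspace X. g (h y) = j y))"
    proof (intro allI impI)
      fix a j
      assume "a \<in> topspace Y \<and> continuous_map X Z j \<and> g a = j x"
      then show "\<exists>h. continuous_map X Y h \<and> h x = a \<and> (\<forall>y\<in>topspace X. g (h y) = j y)"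
        using llp[unfolded llp_def point, rule_format, of "\<lambda>_. a" j]
          continuous_map_from_singleton_iff[OF assms, of Y "\<lambda>_. a"]
        by auto
    qed
  next
    assume lift: "\<forall>a j. a \<in> topspace Y \<and> continuous_map X Z j \<and> g a = j x \<longrightarrow>
       (\<exists>h. continuous_map X Y h \<and> h x = a \<and> (\<forall>y\<in>topspace X. g (h y) = j y))"
    show "llp (subtopology X {x}) X id Y Z g"
      unfolding llp_def point
    proof (intro allI impI)
      fix i j
      assume "continuous_map (subtopology X {x}) Y i \<and> continuous_map X Z j \<and>
          (\<forall>a\<in>{x}. g (i a) = j (id a))"
      then show "\<exists>h. continuous_map X Y h \<and> (\<forall>a\<in>{x}. h (id a) = i a) \<and>
          (\<forall>y\<in>topspace X. g (h y) = j y)"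
        using lift continuous_map_from_singleton_iff[OF assms, of Y i] by auto
    qed
  qed
qed

lemma topspace_Qtop [simp]: "topspace Qtop = UNIV"
  using openin_subset[of Qtop UNIV] by (auto simp: openin_Qtop Qopen_def)

lemma openin_Ttop: "openin Ttop S \<longleftrightarrow> Topen S"
  by (simp add: Ttop_def topology_inverse' istopology_Topen)

lemma UNIV_tpt: "UNIV = {Ts, Tc}"
  using tpt.exhaust by auto

lemma topspace_Ttop [simp]: "topspace Ttop = UNIV"
proof -
  have "UNIV \<subseteq> topspace Ttop"
    by (rule openin_subset) (simp add: openin_Ttop Topen_def UNIV_tpt)
  then show ?thesis
    by auto
qed

lemma q_simps [simp]: "q Qp = Ts" "q Qm = Ts" "q Qu = Ts" "q Qc = Tc"
  by (simp_all add: q_def)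

lemma q_eq_Ts_iff [simp]: "q a = Ts \<longleftrightarrow> a \<noteq> Qc"
  by (simp add: q_def)

definition Qnbhd :: "qpt \<Rightarrow> qpt set" where
  "Qnbhd a = (case a of Qp \<Rightarrow> {Qp} | Qm \<Rightarrow> {Qp, Qu, Qm} | Qu \<Rightarrow> {Qu} | Qc \<Rightarrow> {Qu, Qc})"

lemma Qopen_Qnbhd: "Qopen (Qnbhd a)"
  by (cases a) (auto simp: Qopen_def Qnbhd_def)

lemma Qopen_iff_Qnbhd_subset: "Qopen S \<longleftrightarrow> (\<forall>a\<in>S. Qnbhd a \<subseteq> S)"
  unfolding Qopen_def Qnbhd_def by (auto split: qpt.splits)

lemma mem_Qnbhd_self: "a \<in> Qnbhd a"
  by (cases a) (auto simp: Qnbhd_def)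

lemma continuous_map_Qtop_iff:
  "continuous_map X Qtop h \<longleftrightarrow> (\<forall>a. openin X {y \<in> topspace X. h y \<in> Qnbhd a})"
proof
  assume "continuous_map X Qtop h"
  then show "\<forall>a. openin X {y \<in> topspace X. h y \<in> Qnbhd a}"
    using openin_continuous_map_preimage Qopen_Qnbhd openin_Qtop by blast
next
  assume nbhds: "\<forall>a. openin X {y \<in> topspace X. h y \<in> Qnbhd a}"
  have "openin X {y \<in> topspace X. h y \<in> S}" if "Qopen S" for S
  proof -
    have "{y \<in> topspace X. h y \<in> S} = (\<Union>a\<in>S. {y \<in> topspace X. h y \<in> Qnbhd a})"
      using that mem_Qnbhd_self by (auto simp: Qopen_iff_Qnbhd_subset)
    then show ?thesis
      using nbhds by auto
  qed
  then show "continuous_map X Qtop h"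
    by (simp add: continuous_map_def openin_Qtop)
qed

lemma continuous_map_Ttop_iff:
  "continuous_map X Ttop j \<longleftrightarrow> openin X {y \<in> topspace X. j y = Ts}"
proof
  assume "continuous_map X Ttop j"
  then have "openin X {y \<in> topspace X. j y \<in> {Ts}}"
    by (rule openin_continuous_map_preimage) (simp add: openin_Ttop Topen_def)
  then show "openin X {y \<in> topspace X. j y = Ts}"
    by simp
next
  assume Ts_open: "openin X {y \<in> topspace X. j y = Ts}"
  have "openin X {y \<in> topspace X. j y \<in> S}" if "Topen S" for S
  proof -
    have "{y \<in> topspace X. j y \<in> S} =
        (if S = {} then {} else if S = {Ts} then {y \<in> topspace X. j y = Ts} else topspace X)"
      using that by (auto simp: Topen_def UNIV_tpt[symmetric])
    then show ?thesis
      using Ts_open by simp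
  qed
  then show "continuous_map X Ttop j"
    by (auto simp: continuous_map_def openin_Ttop)
qed

definition q_lift :: "('a \<Rightarrow> tpt) \<Rightarrow> 'a set \<Rightarrow> 'a set \<Rightarrow> 'a \<Rightarrow> qpt" where
  "q_lift j P W y = (if j y \<noteq> Ts then Qc else if y \<in> W then Qu else if y \<in> P then Qp else Qm)"

lemma q_q_lift [simp]: "q (q_lift j P W y) = j y"
  by (cases "j y") (simp_all add: q_lift_def)

lemma continuous_map_q_lift:
  assumes j: "continuous_map X Ttop j"
    and P: "openin X P" and W: "openin X W"
    and closed_part: "{y \<in> topspace X. j y \<noteq> Ts} \<subseteq> W" and "disjnt P W"
  shows "continuous_map X Qtop (q_lift j P W)"
  unfolding continuous_map_Qtop_iff
proof
  fix a
  let ?open_part = "{y \<in> topspace X. j y = Ts}"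
  have open_part: "openin X ?open_part"
    using j by (simp add: continuous_map_Ttop_iff)
  have "P \<subseteq> topspace X" "W \<subseteq> topspace X"
    using P W by (simp_all add: openin_subset)
  then have "{y \<in> topspace X. q_lift j P W y \<in> Qnbhd a} =
      (case a of Qp \<Rightarrow> P | Qm \<Rightarrow> ?open_part | Qu \<Rightarrow> ?open_part \<inter> W | Qc \<Rightarrow> W)"
    using closed_part \<open>disjnt P W\<close>
    by (cases a) (auto simp: Qnbhd_def q_lift_def disjnt_iff)
  then show "openin X {y \<in> topspace X. q_lift j P W y \<in> Qnbhd a}"
    using P W open_part by (cases a) auto
qed

lemma regular_space_lift_along_q:
  assumes "regular_space X" and x: "x \<in> topspace X"
    and j: "continuous_map X Ttop j" and "q a = j x"
  shows "\<exists>h. continuous_map X Qtop h \<and> h x = a \<and> (\<forall>y\<in>topspace X. q (h y) = j y)"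
proof -
  have "j x = q a"
    using \<open>q a = j x\<close> by simp
  let ?F = "{y \<in> topspace X. j y \<noteq> Ts}"
  have "?F = topspace X - {y \<in> topspace X. j y = Ts}"
    by auto
  then have F: "closedin X ?F"
    using j by (simp add: continuous_map_Ttop_iff closedin_diff)
  show ?thesis
  proof (cases "a \<in> {Qu, Qc}")
    case True
    have "continuous_map X Qtop (q_lift j {} (topspace X))"
      by (rule continuous_map_q_lift[OF j]) auto
    moreover have "q_lift j {} (topspace X) x = a"
      using True x \<open>j x = q a\<close> by (auto simp: q_lift_def)
    ultimately show ?thesis
      by (metis q_q_lift)
  next
    case False
    then have "j x = Ts"
      using \<open>j x = q a\<close> by auto
    with x have "x \<in> topspace X - ?F"
      by simp
    then obtain P W where P: "openin X P" and W: "openin X W"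
      and "x \<in> P" "?F \<subseteq> W" "disjnt P W"
      using \<open>regular_space X\<close>[unfolded regular_space_def, rule_format, OF conjI[OF F]]
      by blast
    define P' where "P' = (if a = Qp then P else {})"
    have "continuous_map X Qtop (q_lift j P' W)"
      using P W \<open>?F \<subseteq> W\<close> \<open>disjnt P W\<close>
      by (intro continuous_map_q_lift[OF j]) (simp_all add: P'_def)
    moreover have "q_lift j P' W x = a"
      using False \<open>j x = Ts\<close> \<open>x \<in> P\<close> \<open>disjnt P W\<close>
      by (cases a) (auto simp: q_lift_def P'_def disjnt_iff)
    ultimately show ?thesis
      by (metis q_q_lift)
  qed
qed

lemma regular_space_if_lift_along_q:
  assumes lift: "\<And>x j. x \<in> topspace X \<Longrightarrow> continuous_map X Ttop j \<Longrightarrow> j x = Ts \<Longrightarrow>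
      \<exists>h. continuous_map X Qtop h \<and> h x = Qp \<and> (\<forall>y\<in>topspace X. q (h y) = j y)"
  shows "regular_space X"
  unfolding regular_space_def
proof (intro allI impI)
  fix C x
  assume "closedin X C \<and> x \<in> topspace X - C"
  then have C: "closedin X C" and x: "x \<in> topspace X" "x \<notin> C"
    by auto
  define j where "j y = (if y \<in> C then Tc else Ts)" for y
  have "{y \<in> topspace X. j y = Ts} = topspace X - C"
    by (auto simp: j_def)
  then have "continuous_map X Ttop j"
    using C by (simp add: continuous_map_Ttop_iff openin_diff)
  moreover have "j x = Ts"
    using x by (simp add: j_def)
  ultimately obtain h where h: "continuous_map X Qtop h" and "h x = Qp"
    and hj: "\<forall>y\<in>topspace X. q (h y) = j y"
    using lift x by blast
  let ?U = "{y \<in> topspace X. h y \<in> Qnbhd Qp}" and ?V = "{y \<in> topspace X. h y \<in> Qnbhd Qc}"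
  have "openin X ?U" "openin X ?V"
    using h by (simp_all add: continuous_map_Qtop_iff)
  moreover have "x \<in> ?U" "disjnt ?U ?V"
    using x \<open>h x = Qp\<close> by (auto simp: Qnbhd_def disjnt_iff)
  moreover have "C \<subseteq> ?V"
  proof
    fix y
    assume "y \<in> C"
    then have "y \<in> topspace X" "q (h y) = Tc"
      using hj closedin_subset[OF C] by (auto simp: j_def)
    then show "y \<in> ?V"
      by (simp add: Qnbhd_def q_def split: if_splits)
  qed
  ultimately show "\<exists>U V. openin X U \<and> openin X V \<and> x \<in> U \<and> C \<subseteq> V \<and> disjnt U V"
    by blast
qed

theorem claim1:
  fixes X :: "'a topology"
  assumes "topspace X \<noteq> {}"
  shows "regular_space X \<longleftrightarrow>
         (\<forall>x\<in>topspace X. llp (subtopology X {x}) X id Qtop Ttop q)"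
proof
  assume "regular_space X"
  then show "\<forall>x\<in>topspace X. llp (subtopology X {x}) X id Qtop Ttop q"
    by (simp add: llp_singleton_iff regular_space_lift_along_q)
next
  assume "\<forall>x\<in>topspace X. llp (subtopology X {x}) X id Qtop Ttop q"
  then have "\<exists>h. continuous_map X Qtop h \<and> h x = Qp \<and> (\<forall>y\<in>topspace X. q (h y) = j y)"
    if "x \<in> topspace X" "continuous_map X Ttop j" "j x = Ts" for x j
    using that by (simp add: llp_singleton_iff)
  then show "regular_space X"
    by (rule regular_space_if_lift_along_q)
qed

end
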